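(* Let $A,B\subset\mathbb{R}^2$ be Pareto sets, let $M=\{a+b:a\in A,b\in B\}$ be their Minkowski sum and $C$ their Pareto sum. Let $c,c'\in C$ with $c.x<c'.x$, and let $\varepsilon>0$. If there exists an element of $M$ that dominates the point $(c'.x-\varepsilon,\,c.y-\varepsilon)$, then the lexicographically smallest element $m\in M$ dominating $(c'.x-\varepsilon,\,c.y-\varepsilon)$ belongs to $C$.
   Context: For $p,p'\in\mathbb{R}^2$, $p$ dominates $p'$ if $p\neq p'$, $p.x\le p'.x$ and $p.y\le p'.y$. A Pareto set is a set $S\subset\mathbb{R}^2$ in which no point dominates another. The Pareto sum $C$ of Pareto sets $A,B$ is the set of points of $M$ not dominated by any point of $M$. *)

theory Defs
  imports Main "HOL.Real"
begin

type_synonym point = "real \<times> real"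

definition dominates :: "point \<Rightarrow> point \<Rightarrow> bool" where
  "dominates p p' \<longleftrightarrow> p \<noteq> p' \<and> fst p \<le> fst p' \<and> snd p \<le> snd p'"

definition pareto_set :: "point set \<Rightarrow> bool" where
  "pareto_set S \<longleftrightarrow> (\<forall>p\<in>S. \<forall>q\<in>S. \<not> dominates p q)"

definition minkowski_sum :: "point set \<Rightarrow> point set \<Rightarrow> point set" where
  "minkowski_sum A B = {(fst a + fst b, snd a + snd b) | a b. a \<in> A \<and> b \<in> B}"

definition pareto_sum :: "point set \<Rightarrow> point set \<Rightarrow> point set" where
  "pareto_sum A B = {m \<in> minkowski_sum A B. \<not> (\<exists>m'\<in>minkowski_sum A B. dominates m' m)}"

definition lex_less :: "point \<Rightarrow> point \<Rightarrow> bool" where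
  "lex_less p q \<longleftrightarrow> fst p < fst q \<or> (fst p = fst q \<and> snd p < snd q)"

definition lex_least :: "point set \<Rightarrow> point \<Rightarrow> bool" where
  "lex_least S m \<longleftrightarrow> m \<in> S \<and> (\<forall>s\<in>S. s \<noteq> m \<longrightarrow> lex_less m s)"

end

theory Submission
  imports Defs
begin

(* An element of M dominating m would also dominate the point (c'.x - \<epsilon>, c.y - \<epsilon>),
   since domination is transitive, and it would be lexicographically smaller than m,
   contradicting the minimality of m. *)

lemma dominates_trans:
  assumes "dominates p q" and "dominates q r"
  shows "dominates p r"
  using assms unfolding dominates_def by (auto simp: prod_eq_iff)

lemma dominates_imp_lex_less:
  assumes "dominates p q"
  shows "lex_less p q"
  using assms unfolding dominates_def lex_less_def by (auto simp: prod_eq_iff)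

lemma lex_less_asym:
  assumes "lex_less p q"
  shows "\<not> lex_less q p"
  using assms unfolding lex_less_def by auto

lemma lex_least_not_dominated:
  assumes least: "lex_least S m"
    and up_closed: "\<And>s p. s \<in> S \<Longrightarrow> p \<in> M \<Longrightarrow> dominates p s \<Longrightarrow> p \<in> S"
    and "p \<in> M"
  shows "\<not> dominates p m"
proof
  assume dom: "dominates p m"
  have "m \<in> S" using least unfolding lex_least_def by blast
  with up_closed \<open>p \<in> M\<close> dom have "p \<in> S" by blast
  moreover have "p \<noteq> m" using dom unfolding dominates_def by blast
  ultimately have "lex_less m p" using least unfolding lex_least_def by blast
  with dominates_imp_lex_less[OF dom] show False using lex_less_asym by blast
qed

lemma lex_least_dominators_in_pareto_sum:
  assumes "lex_least {p \<in> minkowski_sum A B. dominates p q} m"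
  shows "m \<in> pareto_sum A B"
proof -
  have "m \<in> minkowski_sum A B"
    using assms unfolding lex_least_def by blast
  moreover have "\<not> dominates p m" if "p \<in> minkowski_sum A B" for p
    using lex_least_not_dominated[OF assms _ that] dominates_trans by blast
  ultimately show ?thesis unfolding pareto_sum_def by blast
qed

theorem lemma1:
  fixes A B :: "point set" and c c' m :: point and \<epsilon> :: real
  assumes "pareto_set A" and "pareto_set B"
    and "c \<in> pareto_sum A B" and "c' \<in> pareto_sum A B"
    and "fst c < fst c'" and "\<epsilon> > 0"
    and "\<exists>m0\<in>minkowski_sum A B. dominates m0 (fst c' - \<epsilon>, snd c - \<epsilon>)"
    and "lex_least {p \<in> minkowski_sum A B. dominates p (fst c' - \<epsilon>, snd c - \<epsilon>)} m"
  shows "m \<in> pareto_sum A B"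
  using lex_least_dominators_in_pareto_sum[OF assms(8)] .

end
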